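(* Let $k$ be a finite field of odd characteristic and $b:V\times V\to W$ a non-degenerate Hermitian $k$-bilinear map which is $\perp$-indecomposable. Then for every $x\in\operatorname{Adj}(b)$ the element $x+x^*$ is either invertible or nilpotent. In particular every $x\in\operatorname{Sym}(b)$ is invertible or nilpotent.
   Context: $b$ is Hermitian if $W=b(V,V)$ and $b(u,v)=b(v,u)\theta$ for some $\theta\in\mathrm{GL}(W)$; non-degenerate if $b(u,V)=0=b(V,u)$ implies $u=0$. $\operatorname{Adj}(b)$ is the set of $f\in\operatorname{End}V$ with an (unique) adjoint $f^*\in\operatorname{End}V$ satisfying $b(uf,v)=b(u,vf^* )$ for all $u,v$; $\operatorname{Sym}(b)=\{f\in\operatorname{End}V: b(uf,v)=b(u,vf)\ \forall u,v\}$. $b$ is $\perp$-indecomposable if there is no set $\mathcal{X}\neq\{V\}$ of subspaces, pairwise $b$-orthogonal, generating $V$ with no proper subset generating $V$. *)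

theory Defs
  imports Complex_Main
begin

text \<open>V is a k-vector space given by a type 'v with scalar multiplication sV,
 W likewise ('w, sW). Endomorphisms act as functions; the paper's right action
 u f is written f u.\<close>

definition k_bilinear ::
  "('k::field \<Rightarrow> 'v::ab_group_add \<Rightarrow> 'v) \<Rightarrow> ('k \<Rightarrow> 'w::ab_group_add \<Rightarrow> 'w)
   \<Rightarrow> ('v \<Rightarrow> 'v \<Rightarrow> 'w) \<Rightarrow> bool" where
  "k_bilinear sV sW b \<longleftrightarrow>
     (\<forall>u. Vector_Spaces.linear sV sW (\<lambda>v. b u v)) \<and>
     (\<forall>v. Vector_Spaces.linear sV sW (\<lambda>u. b u v))"

definition hermitian ::
  "('k::field \<Rightarrow> 'v::ab_group_add \<Rightarrow> 'v) \<Rightarrow> ('k \<Rightarrow> 'w::ab_group_add \<Rightarrow> 'w)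
   \<Rightarrow> ('v \<Rightarrow> 'v \<Rightarrow> 'w) \<Rightarrow> bool" where
  "hermitian sV sW b \<longleftrightarrow>
     module.span sW {b u v | u v. True} = UNIV \<and>
     (\<exists>\<theta>. Vector_Spaces.linear sW sW \<theta> \<and> bij \<theta> \<and> (\<forall>u v. b u v = \<theta> (b v u)))"

definition nondegenerate :: "('v::zero \<Rightarrow> 'v \<Rightarrow> 'w::zero) \<Rightarrow> bool" where
  "nondegenerate b \<longleftrightarrow> (\<forall>u. (\<forall>v. b u v = 0) \<and> (\<forall>v. b v u = 0) \<longrightarrow> u = 0)"

definition b_orthogonal :: "('v \<Rightarrow> 'v \<Rightarrow> 'w::zero) \<Rightarrow> 'v set \<Rightarrow> 'v set \<Rightarrow> bool" where
  "b_orthogonal b X Y \<longleftrightarrow> (\<forall>x\<in>X. \<forall>y\<in>Y. b x y = 0 \<and> b y x = 0)"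

definition perp_indecomposable ::
  "('k::field \<Rightarrow> 'v::ab_group_add \<Rightarrow> 'v) \<Rightarrow> ('v \<Rightarrow> 'v \<Rightarrow> 'w::zero) \<Rightarrow> bool" where
  "perp_indecomposable sV b \<longleftrightarrow>
     \<not> (\<exists>XX :: 'v set set.
          XX \<noteq> {UNIV} \<and>
          (\<forall>X\<in>XX. module.subspace sV X) \<and>
          (\<forall>X\<in>XX. \<forall>Y\<in>XX. X \<noteq> Y \<longrightarrow> b_orthogonal b X Y) \<and>
          module.span sV (\<Union>XX) = UNIV \<and>
          (\<forall>YY. YY \<subset> XX \<longrightarrow> module.span sV (\<Union>YY) \<noteq> UNIV))"

definition is_adjoint ::
  "('k::field \<Rightarrow> 'v::ab_group_add \<Rightarrow> 'v) \<Rightarrow> ('v \<Rightarrow> 'v \<Rightarrow> 'w) \<Rightarrow> ('v \<Rightarrow> 'v) \<Rightarrow> ('v \<Rightarrow> 'v) \<Rightarrow> bool" where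
  "is_adjoint sV b f g \<longleftrightarrow> Vector_Spaces.linear sV sV g \<and> (\<forall>u v. b (f u) v = b u (g v))"

definition Adj ::
  "('k::field \<Rightarrow> 'v::ab_group_add \<Rightarrow> 'v) \<Rightarrow> ('v \<Rightarrow> 'v \<Rightarrow> 'w) \<Rightarrow> ('v \<Rightarrow> 'v) set" where
  "Adj sV b = {f. Vector_Spaces.linear sV sV f \<and> (\<exists>g. is_adjoint sV b f g)}"

definition adjoint ::
  "('k::field \<Rightarrow> 'v::ab_group_add \<Rightarrow> 'v) \<Rightarrow> ('v \<Rightarrow> 'v \<Rightarrow> 'w) \<Rightarrow> ('v \<Rightarrow> 'v) \<Rightarrow> ('v \<Rightarrow> 'v)" where
  "adjoint sV b f = (THE g. is_adjoint sV b f g)"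

definition Sym ::
  "('k::field \<Rightarrow> 'v::ab_group_add \<Rightarrow> 'v) \<Rightarrow> ('v \<Rightarrow> 'v \<Rightarrow> 'w) \<Rightarrow> ('v \<Rightarrow> 'v) set" where
  "Sym sV b = {f. Vector_Spaces.linear sV sV f \<and> (\<forall>u v. b (f u) v = b u (f v))}"

definition invertible_or_nilpotent :: "('v \<Rightarrow> 'v::zero) \<Rightarrow> bool" where
  "invertible_or_nilpotent f \<longleftrightarrow> bij f \<or> (\<exists>n. (f ^^ n) = (\<lambda>_. 0))"

end

theory Submission
  imports Defs
begin

text \<open>Since V is finite, some power f = x^N of an endomorphism x is idempotent, so
  V = ker f + im f with ker f \<inter> im f = 0 (Fitting decomposition). If x is symmetric for b,
  so is f, and then ker f and im f are b-orthogonal. By \<open>\<perp>\<close>-indecomposability one of them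
  is all of V: either x^N = 0, or x^N = id and x is invertible. For x \<in> Adj(b), the
  Hermitian symmetry of b makes x + x* symmetric.\<close>

lemma funpow_eventually_periodic:
  fixes s :: "'a \<Rightarrow> 'a"
  assumes "s ^^ m = s ^^ (m + p)" and "m \<le> n"
  shows "s ^^ (n + q * p) = s ^^ n"
proof (induction q)
  case 0
  then show ?case by simp
next
  case (Suc q)
  have "s ^^ (n + Suc q * p) = s ^^ (n + q * p - m) \<circ> s ^^ (m + p)"
    using assms(2) by (simp flip: funpow_add add: algebra_simps)
  also have "\<dots> = s ^^ (n + q * p - m) \<circ> s ^^ m"
    using assms(1) by simp
  also have "\<dots> = s ^^ (n + q * p)"
    using assms(2) by (simp flip: funpow_add)
  finally show ?case using Suc by simp
qed

lemma finite_funpow_idempotent: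
  fixes s :: "'a \<Rightarrow> 'a"
  assumes "finite (UNIV :: 'a set)"
  obtains N where "N > 0" and "s ^^ N \<circ> s ^^ N = s ^^ N"
proof -
  have "finite (UNIV :: ('a \<Rightarrow> 'a) set)"
    using finite_set_of_finite_funs[OF assms assms] by simp
  then have "\<not> inj (\<lambda>n::nat. s ^^ n)"
    using finite_imageD finite_subset infinite_UNIV_nat subset_UNIV by blast
  then obtain m n where "m < n" and "s ^^ m = s ^^ n"
    unfolding inj_def by (metis linorder_neqE_nat)
  then obtain p where "p > 0" and period: "s ^^ m = s ^^ (m + p)"
    by (metis less_imp_add_positive)
  define N where "N = (m + 1) * p"
  have "(m + 1) * 1 \<le> N"
    using \<open>p > 0\<close> unfolding N_def by (intro mult_le_mono2) simp
  then have "m < N" by simp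
  then have "s ^^ (N + N) = s ^^ N"
    using funpow_eventually_periodic[OF period, of N "m + 1"] unfolding N_def by simp
  then show thesis
    using that[of N] \<open>m < N\<close> by (simp add: funpow_add)
qed

lemma funpow_symmetric:
  assumes "\<And>u v. b (f u) v = b u (f v)"
  shows "b ((f ^^ n) u) v = b u ((f ^^ n) v)"
  by (induction n arbitrary: u v) (simp_all add: assms funpow_swap1)

lemma b_orthogonal_commute: "b_orthogonal b X Y \<longleftrightarrow> b_orthogonal b Y X"
  unfolding b_orthogonal_def by blast

context vector_space
begin

lemma perp_indecomposable_orthogonal_summands:
  assumes "perp_indecomposable scale b"
    and "subspace K" and "subspace R"
    and "b_orthogonal b K R"
    and "span (K \<union> R) = UNIV"
  shows "K = UNIV \<or> R = UNIV"
proof (rule ccontr)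
  assume "\<not> (K = UNIV \<or> R = UNIV)"
  then have K: "K \<noteq> UNIV" and R: "R \<noteq> UNIV"
    by simp_all
  have span_K: "span K = K" and span_R: "span R = R"
    using assms(2,3) by (simp_all only: span_eq_iff)
  have "K \<noteq> R"
  proof
    assume "K = R"
    then have "span (K \<union> R) = K"
      using span_K by simp
    then show False
      using K assms(5) by simp
  qed
  have "span {} \<subseteq> K"
    using span_minimal[of "{}" K] assms(2) by simp
  then have "span {} \<noteq> UNIV"
    using K top.extremum_uniqueI by blast
  have "\<exists>XX. XX \<noteq> {UNIV} \<and> (\<forall>X\<in>XX. subspace X) \<and>
      (\<forall>X\<in>XX. \<forall>Y\<in>XX. X \<noteq> Y \<longrightarrow> b_orthogonal b X Y) \<and>
      span (\<Union>XX) = UNIV \<and> (\<forall>YY. YY \<subset> XX \<longrightarrow> span (\<Union>YY) \<noteq> UNIV)"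
  proof (intro exI[of _ "{K, R}"] conjI ballI allI impI)
    show "{K, R} \<noteq> {UNIV}"
      using K by blast
    show "subspace X" if "X \<in> {K, R}" for X
      using that assms(2,3) by blast
    show "b_orthogonal b X Y" if "X \<in> {K, R}" "Y \<in> {K, R}" "X \<noteq> Y" for X Y
      using that assms(4) b_orthogonal_commute by blast
    show "span (\<Union>{K, R}) = UNIV"
      using assms(5) by simp
    fix YY
    assume "YY \<subset> {K, R}"
    then have "YY = {} \<or> YY = {K} \<or> YY = {R}"
      by auto
    then show "span (\<Union>YY) \<noteq> UNIV"
      using K R span_K span_R \<open>span {} \<noteq> UNIV\<close> by (elim disjE) (simp_all del: span_eq_iff)
  qed
  then show False
    using assms(1) unfolding perp_indecomposable_def by blast
qed

lemma symmetric_idempotent_zero_or_id: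
  assumes "perp_indecomposable scale b" and "Vector_Spaces.linear scale scale f"
    and idem: "f \<circ> f = f" and sym: "\<And>u v. b (f u) v = b u (f v)"
    and "\<And>u. b u 0 = 0" and "\<And>u. b 0 u = 0"
  shows "f = (\<lambda>_. 0) \<or> f = id"
proof -
  interpret f: Vector_Spaces.linear scale scale f by fact
  let ?K = "{v. f v = 0}" and ?R = "range f"
  have idem': "f (f v) = f v" for v
    using idem by (metis comp_apply)
  have "v \<in> span (?K \<union> ?R)" for v
  proof -
    have "v - f v \<in> ?K" and "f v \<in> ?R"
      by (simp_all add: f.diff idem')
    then have "(v - f v) + f v \<in> span (?K \<union> ?R)"
      by (meson UnI1 UnI2 span_add span_base)
    then show ?thesis by simp
  qed
  then have "span (?K \<union> ?R) = UNIV"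
    by blast
  moreover have "b_orthogonal b ?K ?R"
    unfolding b_orthogonal_def
  proof safe
    fix u v
    assume "f u = 0"
    then show "b u (f v) = 0" and "b (f v) u = 0"
      using sym[of u v] sym[of v u] assms(5,6) by simp_all
  qed
  ultimately have "?K = UNIV \<or> ?R = UNIV"
    using perp_indecomposable_orthogonal_summands[OF assms(1) f.subspace_kernel
        f.subspace_image[OF subspace_UNIV]] by blast
  then show ?thesis
  proof
    assume "?K = UNIV"
    then show ?thesis by auto
  next
    assume "?R = UNIV"
    then have "f v = v" for v
      by (metis UNIV_I idem' imageE)
    then show ?thesis by auto
  qed
qed

lemma linear_funpow:
  assumes "Vector_Spaces.linear scale scale f"
  shows "Vector_Spaces.linear scale scale (f ^^ n)"
proof (induction n)
  case 0
  then show ?case using linear_id by (simp add: id_def)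
next
  case (Suc n)
  then show ?case
    unfolding funpow.simps(2) by (rule Vector_Spaces.linear_compose[OF _ assms])
qed

lemma Sym_invertible_or_nilpotent:
  assumes "finite (UNIV :: 'b set)" and "perp_indecomposable scale b"
    and "x \<in> Sym scale b" and "\<And>u. b u 0 = 0" and "\<And>u. b 0 u = 0"
  shows "invertible_or_nilpotent x"
proof -
  have lin: "Vector_Spaces.linear scale scale x" and sym: "\<And>u v. b (x u) v = b u (x v)"
    using assms(3) unfolding Sym_def by auto
  obtain N where "N > 0" and idem: "x ^^ N \<circ> x ^^ N = x ^^ N"
    using finite_funpow_idempotent[OF assms(1)] .
  have "x ^^ N = (\<lambda>_. 0) \<or> x ^^ N = id"
    using symmetric_idempotent_zero_or_id[OF assms(2) linear_funpow[OF lin] idem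
        funpow_symmetric[of b x, OF sym] assms(4,5)] .
  then show ?thesis
  proof
    assume "x ^^ N = (\<lambda>_. 0)"
    then show ?thesis
      unfolding invertible_or_nilpotent_def by blast
  next
    assume "x ^^ N = id"
    then have "x ^^ (N - 1) \<circ> x = id" and "x \<circ> x ^^ (N - 1) = id"
      using \<open>N > 0\<close> by (simp_all flip: funpow_Suc_right funpow.simps(2))
    then show ?thesis
      unfolding invertible_or_nilpotent_def by (blast intro: o_bij)
  qed
qed

end

lemma k_bilinear_zero:
  assumes "k_bilinear sV sW b"
  shows "b u 0 = 0" and "b 0 u = 0"
  using assms module_hom.zero[OF module_hom_linearI]
  unfolding k_bilinear_def by blast+

lemma hermitian_nondegenerate_radical:
  assumes "hermitian sV sW b" and "nondegenerate b" and "\<And>u. b u w = 0"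
  shows "w = 0"
proof -
  obtain \<theta> where lin: "Vector_Spaces.linear sW sW \<theta>" and \<theta>: "\<And>u v. b u v = \<theta> (b v u)"
    using assms(1) unfolding hermitian_def by blast
  have "\<theta> 0 = 0"
    using module_hom.zero[OF module_hom_linearI[OF lin]] .
  then have "b w u = 0" for u
    using \<theta>[of w u] assms(3) by simp
  then show ?thesis
    using assms(2,3) unfolding nondegenerate_def by blast
qed

lemma adjoint_eqI:
  assumes "k_bilinear sV sW b" and "hermitian sV sW b" and "nondegenerate b"
    and "is_adjoint sV b f g"
  shows "adjoint sV b f = g"
  unfolding adjoint_def
proof (rule the_equality)
  show "is_adjoint sV b f g" by fact
  fix g'
  assume g': "is_adjoint sV b f g'"
  show "g' = g"
  proof
    fix v
    have "b u (g' v - g v) = 0" for u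
    proof -
      have "module_hom sV sW (b u)"
        using assms(1) module_hom_linearI unfolding k_bilinear_def by blast
      then have "b u (g' v - g v) = b u (g' v) - b u (g v)"
        by (rule module_hom.diff)
      also have "\<dots> = 0"
        using g' assms(4) unfolding is_adjoint_def by simp
      finally show ?thesis .
    qed
    then show "g' v = g v"
      using hermitian_nondegenerate_radical[OF assms(2,3)] by fastforce
  qed
qed

lemma Adj_add_adjoint_in_Sym:
  assumes "k_bilinear sV sW b" and "hermitian sV sW b" and "nondegenerate b"
    and "x \<in> Adj sV b"
  shows "(\<lambda>v. x v + adjoint sV b x v) \<in> Sym sV b"
proof -
  obtain g where lin_x: "Vector_Spaces.linear sV sV x" and g: "is_adjoint sV b x g"
    using assms(4) unfolding Adj_def by blast
  have lin_g: "Vector_Spaces.linear sV sV g" and x_g: "\<And>u v. b (x u) v = b u (g v)"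
    using g unfolding is_adjoint_def by auto
  obtain \<theta> where \<theta>: "\<And>u v. b u v = \<theta> (b v u)"
    using assms(2) unfolding hermitian_def by blast
  have g_x: "b (g u) v = b u (x v)" for u v
    \<comment> \<open>the Hermitian symmetry \<open>\<theta>\<close> moves the adjoint identity to the other argument\<close>
    using \<theta>[of "g u" v] \<theta>[of u "x v"] x_g[of v u] by simp
  have "vector_space_pair sV sV"
    using lin_x unfolding vector_space_pair_def Vector_Spaces.linear_iff by blast
  then have "Vector_Spaces.linear sV sV (\<lambda>v. x v + g v)"
    using lin_x lin_g by (rule vector_space_pair.linear_compose_add)
  moreover have "b (x u + g u) v = b u (x v + g v)" for u v
  proof -
    have left: "module_hom sV sW (\<lambda>u. b u v)" and right: "module_hom sV sW (b u)"
      using assms(1) module_hom_linearI unfolding k_bilinear_def by blast+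
    have "b (x u + g u) v = b (x u) v + b (g u) v"
      using module_hom.add[OF left] by simp
    also have "\<dots> = b u (x v) + b u (g v)"
      using x_g g_x by (simp add: add.commute)
    also have "\<dots> = b u (x v + g v)"
      using module_hom.add[OF right] by simp
    finally show ?thesis .
  qed
  ultimately show ?thesis
    unfolding Sym_def adjoint_eqI[OF assms(1-3) g] by blast
qed

theorem lemma4p33:
  fixes sV :: "'k::field \<Rightarrow> 'v::ab_group_add \<Rightarrow> 'v"
    and sW :: "'k \<Rightarrow> 'w::ab_group_add \<Rightarrow> 'w"
    and b :: "'v \<Rightarrow> 'v \<Rightarrow> 'w"
  assumes "finite (UNIV :: 'k set)"
    and "odd CHAR('k)"
    and "vector_space sV" and "vector_space sW"
    and "finite (UNIV :: 'v set)"
    and "k_bilinear sV sW b"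
    and "hermitian sV sW b"
    and "nondegenerate b"
    and "perp_indecomposable sV b"
  shows "(\<forall>x\<in>Adj sV b. invertible_or_nilpotent (\<lambda>v. x v + adjoint sV b x v))
       \<and> (\<forall>x\<in>Sym sV b. invertible_or_nilpotent x)"
proof -
  have "invertible_or_nilpotent x" if "x \<in> Sym sV b" for x
    using vector_space.Sym_invertible_or_nilpotent[OF assms(3,5,9) that]
      k_bilinear_zero[OF assms(6)] by blast
  then show ?thesis
    using Adj_add_adjoint_in_Sym[OF assms(6-8)] by blast
qed

end
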